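(* Assume the setting of the context, Assumptions (A1)–(A3), and that $\mathcal{F}_n$ is well-calibrated. Let \[ \lambda_{\text{pessimism}}=\bar C\,\frac{\gamma}{1-\gamma}\,\frac{(1+\sqrt{d_{\mathcal{S}}})\beta_N(\delta)}{\sigma},\qquad\bar C=\max\{C_{\max},k_{\max}\}. \] Then with probability at least $1-\delta$, for all episodes $n=1,\dots,N$, all times $t$ and all $(s_t,a_t)\in\mathcal{S}\times\mathcal{A}$, \[ \gamma^{t+1}\max_{\tilde f\in\mathcal{F}_n}\mathbb{E}_\omega\big[\bar V_c^{\hat\pi}(\tilde f(s_t,a_t)+\omega_t)\big]\le\gamma^t\lambda_{\text{pessimism}}\|\sigma_n(s_t,a_t)\|+\mathbb{E}_{\hat\pi}\Big[\sum_{\tau=t+1}^\infty\gamma^\tau\big(c(s_\tau,a_\tau)+\lambda_{\text{pessimism}}\|\sigma_n(s_\tau,a_\tau)\|\big)\Big], \] where on the right $s_{t+1}=\mu_n(s_t,a_t)+\omega_t$, $s_{\tau+1}=\mu_n(s_\tau,a_\tau)+\omega_\tau$ and $a_\tau=\hat\pi(s_\tau)$ for $\tau\ge t+1$.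
   Context: Setting: discounted CMDP with state space $\mathcal{S}\subseteq\mathbb{R}^{d_{\mathcal{S}}}$, compact action space $\mathcal{A}$, unknown dynamics $s_{t+1}=f(s_t,a_t)+\omega_t$, cost $c:\mathcal{S}\times\mathcal{A}\to[0,C_{\max}]$, discount $\gamma\in(0,1)$. (A1) $\omega_t$ i.i.d. zero-mean Gaussian with variance $\sigma^2$. (A2) $f$, reward, $c$ and all $\sigma_n$ Lipschitz with known constants. (A3) each component $f_i$ lies in the RKHS of a kernel $k$ with $\|f_i\|_k\le B$ and $k((s,a),(s,a))\le k_{\max}$. Model: nominal $\mu_n:\mathcal{S}\times\mathcal{A}\to\mathbb{R}^{d_{\mathcal{S}}}$ and uncertainty $\sigma_n$; $\mathcal{F}_{n'}=\{\tilde f:|\tilde f-\mu_{n'}|\le\beta_{n'}\sigma_{n'}\}$; well-calibrated means that with probability $\ge1-\delta$, $f(s,a)\in\mathcal{F}_n=\bigcap_{n'\le n}\mathcal{F}_{n'}$ for all $(s,a)$; $\beta_N(\delta)$ is the calibration constant at episode $N$. $\hat\pi:\mathcal{S}\to\mathcal{A}$ is a deterministic policy and $\bar V_c^{\hat\pi}(s)=\max_{\tilde f\in\mathcal{F}_n}\mathbb{E}_{\hat\pi}[\sum_{t\ge0}\gamma^tc(s_t,a_t)\mid s_0=s]$ with $s_{t+1}=\tilde f(s_t,a_t)+\omega_t$. The left-hand side of the claim equals the expected discounted cost from time $t+1$ on following $\hat\pi$ under the maximizing model $\tilde f$. *)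

theory Defs
  imports "HOL-Analysis.Analysis" "HOL-Probability.Probability"
begin

text \<open>Isotropic zero-mean Gaussian on real^'d with per-coordinate standard deviation sig
  (i.e. variance sig^2 times the identity).\<close>
definition gauss_noise :: "real \<Rightarrow> (real^'d) measure" where
  "gauss_noise sig =
     distr (PiM UNIV (\<lambda>i::'d. density lborel (normal_density 0 sig))) borel vec_lambda"

definition noise_seq :: "real \<Rightarrow> (nat \<Rightarrow> real^'d) measure" where
  "noise_seq sig = PiM UNIV (\<lambda>_::nat. gauss_noise sig)"

primrec traj :: "((real^'d) \<times> 'a \<Rightarrow> real^'d) \<Rightarrow> (real^'d \<Rightarrow> 'a) \<Rightarrow> real^'d
                 \<Rightarrow> (nat \<Rightarrow> real^'d) \<Rightarrow> nat \<Rightarrow> real^'d" where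
  "traj g pol s0 ws 0 = s0"
| "traj g pol s0 ws (Suc t) = g (traj g pol s0 ws t, pol (traj g pol s0 ws t)) + ws t"

definition value_c :: "real \<Rightarrow> real \<Rightarrow> ((real^'d) \<times> 'a \<Rightarrow> real)
     \<Rightarrow> ((real^'d) \<times> 'a \<Rightarrow> real^'d) \<Rightarrow> (real^'d \<Rightarrow> 'a) \<Rightarrow> real^'d \<Rightarrow> ennreal" where
  "value_c gam sig c g pol s =
     (\<integral>\<^sup>+ ws. (\<Sum>t. ennreal (gam ^ t * c (traj g pol s ws t, pol (traj g pol s ws t))))
        \<partial>noise_seq sig)"

text \<open>Model set F_n = intersection over n' <= n of
  F_n' = {g. |g - mu_n'| <= beta_n' sigma_n' componentwise on S x A}
  (models are required to be Borel measurable so that expectations make sense).\<close>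
definition model_set :: "'a::topological_space set \<Rightarrow> (nat \<Rightarrow> (real^'d) \<times> 'a \<Rightarrow> real^'d)
     \<Rightarrow> (nat \<Rightarrow> (real^'d) \<times> 'a \<Rightarrow> real^'d) \<Rightarrow> (nat \<Rightarrow> real) \<Rightarrow> nat
     \<Rightarrow> ((real^'d) \<times> 'a \<Rightarrow> real^'d) set" where
  "model_set A mu sn beta n =
     {g. g \<in> borel_measurable borel \<and>
         (\<forall>n'\<le>n. \<forall>s. \<forall>a\<in>A. \<forall>i. \<bar>g (s, a) $ i - mu n' (s, a) $ i\<bar> \<le> beta n' * sn n' (s, a) $ i)}"

definition pess_value :: "real \<Rightarrow> real \<Rightarrow> ((real^'d) \<times> 'a \<Rightarrow> real)
     \<Rightarrow> ((real^'d) \<times> 'a \<Rightarrow> real^'d) set \<Rightarrow> (real^'d \<Rightarrow> 'a) \<Rightarrow> real^'d \<Rightarrow> ennreal" where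
  "pess_value gam sig c F pol s = (SUP g\<in>F. value_c gam sig c g pol s)"

definition h0_eval :: "('x \<Rightarrow> 'x \<Rightarrow> real) \<Rightarrow> (real \<times> 'x) list \<Rightarrow> 'x \<Rightarrow> real" where
  "h0_eval k xs y = (\<Sum>(al, p)\<leftarrow>xs. al * k p y)"

definition h0_sqnorm :: "('x \<Rightarrow> 'x \<Rightarrow> real) \<Rightarrow> (real \<times> 'x) list \<Rightarrow> real" where
  "h0_sqnorm k xs = (\<Sum>(al, p)\<leftarrow>xs. \<Sum>(be, q)\<leftarrow>xs. al * be * k p q)"

definition pos_def_kernel :: "'x set \<Rightarrow> ('x \<Rightarrow> 'x \<Rightarrow> real) \<Rightarrow> bool" where
  "pos_def_kernel X k \<longleftrightarrow> (\<forall>x\<in>X. \<forall>y\<in>X. k x y = k y x) \<and>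
     (\<forall>xs. set (map snd xs) \<subseteq> X \<longrightarrow> 0 \<le> h0_sqnorm k xs)"

text \<open>h lies in the RKHS H_k on X with ||h||_k <= B: h is the pointwise limit of a Cauchy
  sequence of finite kernel expansions whose norms converge to a limit <= B.\<close>
definition in_rkhs_ball :: "'x set \<Rightarrow> ('x \<Rightarrow> 'x \<Rightarrow> real) \<Rightarrow> real \<Rightarrow> ('x \<Rightarrow> real) \<Rightarrow> bool" where
  "in_rkhs_ball X k B h \<longleftrightarrow>
     (\<exists>xs :: nat \<Rightarrow> (real \<times> 'x) list.
        (\<forall>n. set (map snd (xs n)) \<subseteq> X) \<and>
        (\<forall>e>0. \<exists>N. \<forall>m\<ge>N. \<forall>n\<ge>N.
            h0_sqnorm k (xs m @ map (\<lambda>(be, q). (- be, q)) (xs n)) < e) \<and>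
        (\<forall>y\<in>X. (\<lambda>n. h0_eval k (xs n) y) \<longlonglongrightarrow> h y) \<and>
        (\<exists>L. (\<lambda>n. sqrt (h0_sqnorm k (xs n))) \<longlonglongrightarrow> L \<and> L \<le> B))"

definition lambda_pess :: "real \<Rightarrow> real \<Rightarrow> real \<Rightarrow> real \<Rightarrow> nat \<Rightarrow> real \<Rightarrow> real" where
  "lambda_pess Cmax kmax gam betaN d sig =
     max Cmax kmax * (gam / (1 - gam)) * ((1 + sqrt (real d)) * betaN / sig)"

end

theory Submission
  imports Defs
begin

text \<open>Let U be the nominal value, under the mean model mu_n, of the penalized cost
  c + lam |sigma_n|, and V_max = C_max / (1 - gam) the trivial bound on any discounted cost.
  Shifting centred Gaussian noise by m changes the expectation of a function bounded by V by at
  most V |m|_1 / sig (a total variation estimate), and for a model g in F_n the shift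
  |g - mu_n|_1 is at most beta_N sqrt d |sigma_n|, so gam V_max |g - mu_n|_1 / sig is at most
  lam |sigma_n|. By induction on the horizon, the expected cost under any model in F_n is then
  bounded by min U V_max, hence so is the pessimistic value; one more shift estimate at (s_t, a_t)
  gives the claim, whose right-hand side is gam^(t+1) times the expectation of U after one
  nominal step.\<close>

section \<open>Shifting Gaussian noise\<close>

abbreviation centered_normal :: "real \<Rightarrow> real measure" where
  "centered_normal sig \<equiv> density lborel (normal_density 0 sig)"

lemma normal_density_le_iff:
  assumes "0 < sig"
  shows "normal_density 0 sig x \<le> normal_density 0 sig y \<longleftrightarrow> y\<^sup>2 \<le> x\<^sup>2"
proof -
  have "\<not> pi * sig\<^sup>2 < 0"
    by (simp add: mult_less_0_iff)
  then show ?thesis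
    using assms by (auto simp: normal_density_def divide_le_cancel)
qed

lemma normal_density_le_inverse:
  assumes sig: "0 < sig"
  shows "normal_density 0 sig x \<le> 1 / sig"
proof -
  have "normal_density 0 sig x \<le> normal_density 0 sig 0"
    using sig by (simp add: normal_density_le_iff)
  also have "\<dots> = 1 / sqrt (2 * pi * sig\<^sup>2)"
    by (simp add: normal_density_def)
  also have "\<dots> \<le> 1 / sqrt (sig\<^sup>2)"
    using sig pi_gt3 by (intro divide_left_mono real_sqrt_le_mono) auto
  finally show ?thesis
    using sig by simp
qed

lemma abs_le_half_if_shift_closer:
  fixes a x :: real
  assumes "x\<^sup>2 < (x + a)\<^sup>2" "x\<^sup>2 \<le> (x - a)\<^sup>2"
  shows "\<bar>x\<bar> \<le> \<bar>a\<bar> / 2"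
proof -
  have "0 < a * (a + 2 * x)" "a * (2 * x) \<le> a * a"
    using assms by (simp_all add: power2_eq_square algebra_simps)
  then show ?thesis
    by (cases a "0::real" rule: linorder_cases) (auto simp: zero_less_mult_iff mult_le_cancel_left)
qed

lemma nn_integral_add_positive_part:
  fixes p q :: "'a \<Rightarrow> real"
  assumes [measurable]: "p \<in> borel_measurable M" "q \<in> borel_measurable M"
    and q_nonneg: "\<And>z. 0 \<le> q z"
  shows "(\<integral>\<^sup>+z. indicator {z. q z < p z} z * ennreal (q z) \<partial>M) + (\<integral>\<^sup>+z. ennreal (p z - q z) \<partial>M)
           = (\<integral>\<^sup>+z. indicator {z. q z < p z} z * ennreal (p z) \<partial>M)"
proof -
  have "indicator {z. q z < p z} z * ennreal (q z) + ennreal (p z - q z)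
      = indicator {z. q z < p z} z * ennreal (p z)" for z
    using q_nonneg[of z]
    by (cases "q z < p z") (simp_all add: ennreal_neg ennreal_plus[symmetric] del: ennreal_plus)
  then show ?thesis
    by (subst nn_integral_add[symmetric]) auto
qed

text \<open>Since ennreal truncates at 0, the integral is the total variation distance between
  the normal laws centred at a and at 0.\<close>
lemma normal_density_shift_excess_le:
  assumes sig: "0 < sig"
  shows "(\<integral>\<^sup>+z. ennreal (normal_density 0 sig (z - a) - normal_density 0 sig z) \<partial>lborel)
           \<le> ennreal (\<bar>a\<bar> / sig)"
proof -
  define \<phi> where "\<phi> = normal_density 0 sig"
  define S where "S = {z. \<phi> z < \<phi> (z - a)}"
  define I where "I = {- \<bar>a\<bar> / 2 .. \<bar>a\<bar> / 2}"
  have [measurable]: "\<phi> \<in> borel_measurable borel" "S \<in> sets borel"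
    unfolding \<phi>_def S_def by measurable
  have S_iff: "z \<in> S \<longleftrightarrow> (z - a)\<^sup>2 < z\<^sup>2" for z
    using normal_density_le_iff[OF sig, of "z - a" z] unfolding \<phi>_def S_def by auto
  define P where "P = (\<integral>\<^sup>+z. indicator S z * ennreal (\<phi> z) \<partial>lborel)"
  have "P \<le> (\<integral>\<^sup>+z. ennreal (\<phi> z) \<partial>lborel)"
    unfolding P_def by (intro nn_integral_mono) (simp add: indicator_def)
  also have "\<dots> = 1"
    unfolding \<phi>_def using sig
    by (subst nn_integral_eq_integral) (auto intro: integrable_normal_density)
  finally have P_finite: "P \<noteq> \<infinity>"
    by (auto simp: top_unique)
  have "P + (\<integral>\<^sup>+z. ennreal (\<phi> (z - a) - \<phi> z) \<partial>lborel) = (\<integral>\<^sup>+z. indicator S z * ennreal (\<phi> (z - a)) \<partial>lborel)"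
    unfolding P_def S_def by (rule nn_integral_add_positive_part) (auto simp: \<phi>_def)
  also have "\<dots> = (\<integral>\<^sup>+x. indicator S (x + a) * ennreal (\<phi> x) \<partial>lborel)"
    using nn_integral_real_affine[of "\<lambda>z. indicator S z * ennreal (\<phi> (z - a))" 1 a]
    by (simp add: add.commute)
  also have "\<dots> \<le> (\<integral>\<^sup>+x. indicator S x * ennreal (\<phi> x) + indicator I x * ennreal (1 / sig) \<partial>lborel)"
  proof (intro nn_integral_mono)
    fix x
    have "x \<in> I" if "x + a \<in> S" "x \<notin> S"
      using that abs_le_half_if_shift_closer[of x a] unfolding S_iff I_def by auto
    then show "indicator S (x + a) * ennreal (\<phi> x)
        \<le> indicator S x * ennreal (\<phi> x) + indicator I x * ennreal (1 / sig)"
      using normal_density_le_inverse[OF sig] unfolding \<phi>_def by (auto simp: indicator_def ennreal_leI)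
  qed
  also have "\<dots> = P + ennreal (\<bar>a\<bar> / sig)"
    unfolding P_def I_def S_def using sig
    by (subst nn_integral_add) (auto simp: nn_integral_multc ennreal_mult[symmetric])
  finally show ?thesis
    using P_finite by (simp add: \<phi>_def)
qed

lemma nn_integral_centered_normal_shift_le:
  fixes k :: "real \<Rightarrow> ennreal"
  assumes [measurable]: "k \<in> borel_measurable borel"
    and k_le: "\<And>y. k y \<le> ennreal V" and sig: "0 < sig" and V: "0 \<le> V"
  shows "(\<integral>\<^sup>+y. k (y + a) \<partial>centered_normal sig)
           \<le> (\<integral>\<^sup>+y. k y \<partial>centered_normal sig) + ennreal (V * \<bar>a\<bar> / sig)"
proof -
  define \<phi> where "\<phi> = normal_density 0 sig"
  have [measurable]: "\<phi> \<in> borel_measurable borel"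
    unfolding \<phi>_def by measurable
  have \<phi>_nonneg: "0 \<le> \<phi> x" for x
    unfolding \<phi>_def by simp
  have "(\<integral>\<^sup>+y. k (y + a) \<partial>density lborel \<phi>) = (\<integral>\<^sup>+z. k z * ennreal (\<phi> (z - a)) \<partial>lborel)"
    using nn_integral_real_affine[of "\<lambda>z. k z * ennreal (\<phi> (z - a))" 1 a]
    by (simp add: nn_integral_density \<phi>_nonneg add.commute mult.commute)
  also have "\<dots> \<le> (\<integral>\<^sup>+z. k z * ennreal (\<phi> z) + ennreal V * ennreal (\<phi> (z - a) - \<phi> z) \<partial>lborel)"
  proof (intro nn_integral_mono)
    fix z
    show "k z * ennreal (\<phi> (z - a)) \<le> k z * ennreal (\<phi> z) + ennreal V * ennreal (\<phi> (z - a) - \<phi> z)"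
    proof (cases "\<phi> (z - a) \<le> \<phi> z")
      case True
      then show ?thesis
        by (simp add: ennreal_neg mult_left_mono ennreal_leI)
    next
      case False
      then have "k z * ennreal (\<phi> (z - a)) = k z * ennreal (\<phi> z) + k z * ennreal (\<phi> (z - a) - \<phi> z)"
        using \<phi>_nonneg by (simp add: distrib_left[symmetric] ennreal_plus[symmetric] del: ennreal_plus)
      also have "\<dots> \<le> k z * ennreal (\<phi> z) + ennreal V * ennreal (\<phi> (z - a) - \<phi> z)"
        by (intro add_left_mono mult_right_mono k_le) simp
      finally show ?thesis .
    qed
  qed
  also have "\<dots> = (\<integral>\<^sup>+y. k y \<partial>density lborel \<phi>) + ennreal V * (\<integral>\<^sup>+z. ennreal (\<phi> (z - a) - \<phi> z) \<partial>lborel)"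
    by (subst nn_integral_add) (auto simp: nn_integral_cmult nn_integral_density \<phi>_nonneg mult.commute)
  also have "\<dots> \<le> (\<integral>\<^sup>+y. k y \<partial>density lborel \<phi>) + ennreal V * ennreal (\<bar>a\<bar> / sig)"
    unfolding \<phi>_def by (intro add_left_mono mult_left_mono normal_density_shift_excess_le sig) simp
  finally show ?thesis
    using V sig by (simp add: \<phi>_def ennreal_mult[symmetric] mult.assoc)
qed

lemma measurable_vec_lambda [measurable]:
  "(vec_lambda :: ('d::finite \<Rightarrow> real) \<Rightarrow> real^'d) \<in> borel_measurable (PiM UNIV (\<lambda>_. centered_normal sig))"
proof -
  have "vec_lambda = (\<lambda>x::'d \<Rightarrow> real. \<Sum>i\<in>UNIV. x i *\<^sub>R axis i 1)"
    by (auto simp: fun_eq_iff vec_eq_iff sum_component axis_def if_distrib cong: if_cong)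
  moreover have "(\<lambda>x::'d \<Rightarrow> real. \<Sum>i\<in>UNIV. x i *\<^sub>R axis i (1::real))
      \<in> borel_measurable (PiM UNIV (\<lambda>_. centered_normal sig))"
    by measurable
  ultimately show ?thesis
    by simp
qed

lemma sets_gauss_noise [simp, measurable_cong]:
  "sets (gauss_noise sig :: (real^'d::finite) measure) = sets borel"
  by (simp add: gauss_noise_def)

lemma prob_space_gauss_noise:
  "0 < sig \<Longrightarrow> prob_space (gauss_noise sig :: (real^'d::finite) measure)"
  unfolding gauss_noise_def
  by (intro prob_space.prob_space_distr prob_space_PiM prob_space_normal_density) auto

lemma measurable_vec_lambda_update [measurable]:
  "(\<lambda>y. vec_lambda (x(i := y)) :: real^'d::finite) \<in> borel_measurable borel"
proof -
  have "(\<lambda>y. vec_lambda (x(i := y))) = (\<lambda>y. vec_lambda (x(i := 0)) + y *\<^sub>R axis i (1::real))"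
    by (auto simp: fun_eq_iff vec_eq_iff axis_def)
  then show ?thesis
    by simp
qed

context
  fixes sig :: real and i :: "'d::finite" and h :: "real^'d \<Rightarrow> ennreal"
  assumes sig: "0 < sig" and [measurable]: "h \<in> borel_measurable borel"
begin

lemma measurable_gauss_noise_on_coordinates:
  "(\<lambda>x. h (vec_lambda x)) \<in> borel_measurable (PiM (insert i (UNIV - {i})) (\<lambda>_. centered_normal sig))"
  by (simp add: insert_absorb) measurable

lemma measurable_gauss_noise_section [measurable]:
  "(\<lambda>x. \<integral>\<^sup>+y. h (vec_lambda (x(i := y))) \<partial>centered_normal sig)
     \<in> borel_measurable (PiM (UNIV - {i}) (\<lambda>_. centered_normal sig))"
proof -
  have "(\<lambda>(x, y). h (vec_lambda (x(i := y))))
      \<in> borel_measurable (PiM (UNIV - {i}) (\<lambda>_. centered_normal sig) \<Otimes>\<^sub>M centered_normal sig)"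
    using measurable_comp[OF measurable_add_dim measurable_gauss_noise_on_coordinates]
    by (simp add: comp_def case_prod_unfold)
  then show ?thesis
    using sig by (intro sigma_finite_measure.borel_measurable_nn_integral)
      (auto simp: prob_space_normal_density prob_space_imp_sigma_finite)
qed

lemma nn_integral_gauss_noise_coordinate:
  "(\<integral>\<^sup>+\<omega>. h \<omega> \<partial>gauss_noise sig)
     = (\<integral>\<^sup>+x. (\<integral>\<^sup>+y. h (vec_lambda (x(i := y))) \<partial>centered_normal sig) \<partial>PiM (UNIV - {i}) (\<lambda>_. centered_normal sig))"
proof -
  interpret product_prob_space "\<lambda>_::'d. centered_normal sig" "UNIV - {i}"
    using sig by (auto simp: product_prob_space_def product_prob_space_axioms_def
        product_sigma_finite_def prob_space_normal_density prob_space_imp_sigma_finite)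
  have "(\<integral>\<^sup>+\<omega>. h \<omega> \<partial>gauss_noise sig)
      = (\<integral>\<^sup>+x. h (vec_lambda x) \<partial>PiM (insert i (UNIV - {i})) (\<lambda>_. centered_normal sig))"
    by (simp add: insert_absorb gauss_noise_def nn_integral_distr)
  also have "\<dots> = (\<integral>\<^sup>+x. (\<integral>\<^sup>+y. h (vec_lambda (x(i := y))) \<partial>centered_normal sig)
      \<partial>PiM (UNIV - {i}) (\<lambda>_. centered_normal sig))"
    using measurable_gauss_noise_on_coordinates by (subst product_nn_integral_insert) auto
  finally show ?thesis .
qed

end

lemma nn_integral_gauss_noise_shift_axis_le:
  fixes h :: "real^'d::finite \<Rightarrow> ennreal"
  assumes [measurable]: "h \<in> borel_measurable borel"
    and h_le: "\<And>y. h y \<le> ennreal V" and sig: "0 < sig" and V: "0 \<le> V"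
  shows "(\<integral>\<^sup>+\<omega>. h (\<omega> + axis i a) \<partial>gauss_noise sig)
           \<le> (\<integral>\<^sup>+\<omega>. h \<omega> \<partial>gauss_noise sig) + ennreal (V * \<bar>a\<bar> / sig)"
proof -
  let ?N = "centered_normal sig" and ?J = "UNIV - {i}"
  have J_prob: "prob_space (PiM ?J (\<lambda>_::'d. ?N))"
    using sig by (intro prob_space_PiM prob_space_normal_density)
  have "(\<integral>\<^sup>+\<omega>. h (\<omega> + axis i a) \<partial>gauss_noise sig)
      = (\<integral>\<^sup>+x. (\<integral>\<^sup>+y. h (vec_lambda (x(i := y)) + axis i a) \<partial>?N) \<partial>PiM ?J (\<lambda>_. ?N))"
    using sig by (rule nn_integral_gauss_noise_coordinate) measurable
  also have "\<dots> = (\<integral>\<^sup>+x. (\<integral>\<^sup>+y. h (vec_lambda (x(i := y + a))) \<partial>?N) \<partial>PiM ?J (\<lambda>_. ?N))"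
    by (intro nn_integral_cong arg_cong[where f=h]) (auto simp: vec_eq_iff axis_def)
  also have "\<dots> \<le> (\<integral>\<^sup>+x. (\<integral>\<^sup>+y. h (vec_lambda (x(i := y))) \<partial>?N) + ennreal (V * \<bar>a\<bar> / sig) \<partial>PiM ?J (\<lambda>_. ?N))"
    by (intro nn_integral_mono nn_integral_centered_normal_shift_le h_le sig V) measurable
  also have "\<dots> = (\<integral>\<^sup>+x. (\<integral>\<^sup>+y. h (vec_lambda (x(i := y))) \<partial>?N) \<partial>PiM ?J (\<lambda>_. ?N)) + ennreal (V * \<bar>a\<bar> / sig)"
    using sig by (subst nn_integral_add) (auto simp: prob_space.emeasure_space_1[OF J_prob])
  also have "\<dots> = (\<integral>\<^sup>+\<omega>. h \<omega> \<partial>gauss_noise sig) + ennreal (V * \<bar>a\<bar> / sig)"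
    using nn_integral_gauss_noise_coordinate[OF sig assms(1)] by simp
  finally show ?thesis .
qed

lemma nn_integral_gauss_noise_shift_le:
  fixes h :: "real^'d::finite \<Rightarrow> ennreal"
  assumes [measurable]: "h \<in> borel_measurable borel"
    and h_le: "\<And>y. h y \<le> ennreal V" and sig: "0 < sig" and V: "0 \<le> V"
  shows "(\<integral>\<^sup>+\<omega>. h (\<omega> + m) \<partial>gauss_noise sig)
           \<le> (\<integral>\<^sup>+\<omega>. h \<omega> \<partial>gauss_noise sig) + ennreal (V * (\<Sum>i\<in>UNIV. \<bar>m $ i\<bar>) / sig)"
proof -
  define m_on where "m_on J = (\<chi> i. if i \<in> J then m $ i else 0)" for J
  have "(\<integral>\<^sup>+\<omega>. h (\<omega> + m_on J) \<partial>gauss_noise sig)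
      \<le> (\<integral>\<^sup>+\<omega>. h \<omega> \<partial>gauss_noise sig) + ennreal (V * (\<Sum>i\<in>J. \<bar>m $ i\<bar>) / sig)"
    if "finite J" for J
    using that
  proof (induction J rule: finite_induct)
    case empty
    have "m_on {} = 0"
      by (simp add: m_on_def vec_eq_iff)
    then show ?case
      by simp
  next
    case (insert j J)
    have "m_on (insert j J) = m_on J + axis j (m $ j)"
      using insert.hyps by (auto simp: vec_eq_iff m_on_def axis_def)
    then have "(\<integral>\<^sup>+\<omega>. h (\<omega> + m_on (insert j J)) \<partial>gauss_noise sig)
        = (\<integral>\<^sup>+\<omega>. (\<lambda>y. h (y + m_on J)) (\<omega> + axis j (m $ j)) \<partial>gauss_noise sig)"
      by (simp add: ac_simps)
    also have "\<dots> \<le> (\<integral>\<^sup>+\<omega>. h (\<omega> + m_on J) \<partial>gauss_noise sig) + ennreal (V * \<bar>m $ j\<bar> / sig)"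
      by (rule nn_integral_gauss_noise_shift_axis_le[OF _ h_le sig V]) measurable
    also have "\<dots> \<le> (\<integral>\<^sup>+\<omega>. h \<omega> \<partial>gauss_noise sig) + ennreal (V * (\<Sum>i\<in>J. \<bar>m $ i\<bar>) / sig)
        + ennreal (V * \<bar>m $ j\<bar> / sig)"
      using insert.IH by (rule add_right_mono)
    also have "\<dots> = (\<integral>\<^sup>+\<omega>. h \<omega> \<partial>gauss_noise sig) + ennreal (V * (\<Sum>i\<in>insert j J. \<bar>m $ i\<bar>) / sig)"
      using insert.hyps V sig
      by (simp add: add.assoc ennreal_plus[symmetric] sum_nonneg add_divide_distrib distrib_left
          del: ennreal_plus)
    finally show ?case .
  qed
  moreover have "m_on UNIV = m"
    by (simp add: m_on_def vec_eq_iff)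
  ultimately show ?thesis
    by (metis finite)
qed

lemma prob_space_noise_seq:
  "0 < sig \<Longrightarrow> prob_space (noise_seq sig :: (nat \<Rightarrow> real^'d::finite) measure)"
  unfolding noise_seq_def by (intro prob_space_PiM prob_space_gauss_noise)

lemma measurable_noise_seq_component [measurable]:
  "(\<lambda>ws. ws t) \<in> measurable (noise_seq sig) (borel :: (real^'d::finite) measure)"
proof -
  have "(\<lambda>ws. ws t) \<in> measurable (noise_seq sig) (gauss_noise sig :: (real^'d) measure)"
    unfolding noise_seq_def by measurable
  then show ?thesis
    using measurable_cong_sets by (metis sets_gauss_noise)
qed

lemma measurable_noise_seq_split:
  "(\<lambda>ws::nat \<Rightarrow> real^'d::finite. (ws 0, \<lambda>j. ws (Suc j)))
     \<in> measurable (noise_seq sig) (gauss_noise sig \<Otimes>\<^sub>M noise_seq sig)"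
proof (rule measurable_Pair)
  show "(\<lambda>ws::nat \<Rightarrow> real^'d. ws 0) \<in> measurable (noise_seq sig) (gauss_noise sig)"
    unfolding noise_seq_def by measurable
  show "(\<lambda>ws::nat \<Rightarrow> real^'d. \<lambda>j. ws (Suc j)) \<in> measurable (noise_seq sig) (noise_seq sig)"
    unfolding noise_seq_def
    by (rule measurable_PiM_single'[where f="\<lambda>j ws. ws (Suc j)"]) (auto simp: space_PiM)
qed

lemma nn_integral_noise_seq_split:
  fixes \<Phi> :: "real^'d::finite \<Rightarrow> (nat \<Rightarrow> real^'d) \<Rightarrow> ennreal"
  assumes sig: "0 < sig"
    and \<Phi>_meas [measurable]: "(\<lambda>(\<omega>, ws). \<Phi> \<omega> ws) \<in> borel_measurable (gauss_noise sig \<Otimes>\<^sub>M noise_seq sig)"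
  shows "(\<integral>\<^sup>+ws. \<Phi> (ws 0) (\<lambda>j. ws (Suc j)) \<partial>noise_seq sig)
       = (\<integral>\<^sup>+\<omega>. (\<integral>\<^sup>+ws. \<Phi> \<omega> ws \<partial>noise_seq sig) \<partial>gauss_noise sig)"
proof -
  interpret sequence_space "gauss_noise sig :: (real^'d) measure"
    using sig by (simp add: sequence_space_def product_prob_space_def product_prob_space_axioms_def
        product_sigma_finite_def prob_space_gauss_noise prob_space_imp_sigma_finite)
  have S_eq: "noise_seq sig = S"
    unfolding noise_seq_def ..
  have "(\<integral>\<^sup>+ws. \<Phi> (ws 0) (\<lambda>j. ws (Suc j)) \<partial>noise_seq sig)
      = (\<integral>\<^sup>+ws. \<Phi> (ws 0) (\<lambda>j. ws (Suc j)) \<partial>distr (gauss_noise sig \<Otimes>\<^sub>M S) S (\<lambda>(s, \<omega>). case_nat s \<omega>))"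
    by (simp add: PiM_iter S_eq)
  also have "\<dots> = (\<integral>\<^sup>+p. \<Phi> (fst p) (snd p) \<partial>(gauss_noise sig \<Otimes>\<^sub>M S))"
  proof -
    have "(\<lambda>p. case_nat (fst p) (snd p)) \<in> measurable (gauss_noise sig \<Otimes>\<^sub>M S) S"
      by (rule measurable_case_nat'[OF measurable_fst measurable_snd])
    moreover have "(\<lambda>ws. \<Phi> (ws 0) (\<lambda>j. ws (Suc j))) \<in> borel_measurable (noise_seq sig)"
      using measurable_comp[OF measurable_noise_seq_split \<Phi>_meas] by (simp add: comp_def)
    ultimately show ?thesis
      by (subst nn_integral_distr) (auto simp: S_eq[symmetric] case_prod_unfold)
  qed
  also have "\<dots> = (\<integral>\<^sup>+\<omega>. (\<integral>\<^sup>+ws. \<Phi> \<omega> ws \<partial>noise_seq sig) \<partial>gauss_noise sig)"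
    using sigma_finite_measure.nn_integral_fst[OF prob_space_imp_sigma_finite[OF prob_space_noise_seq[OF sig]],
        of "\<lambda>p. \<Phi> (fst p) (snd p)" "gauss_noise sig"] \<Phi>_meas
    by (simp add: S_eq case_prod_unfold)
  finally show ?thesis .
qed

lemma traj_Suc_restart:
  "traj g pol x ws (Suc t) = traj g pol (g (x, pol x) + ws 0) (\<lambda>j. ws (Suc j)) t"
  by (induction t) auto

lemma measurable_traj [measurable]:
  fixes g :: "(real^'d::finite) \<times> 'a::euclidean_space \<Rightarrow> real^'d"
  assumes [measurable]: "g \<in> borel_measurable borel" "pol \<in> borel_measurable borel"
    "X \<in> borel_measurable M" "W \<in> measurable M (noise_seq sig)"
  shows "(\<lambda>p. traj g pol (X p) (W p) t) \<in> borel_measurable M"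
proof (induction t)
  case (Suc t)
  note [measurable] = Suc
  have "(\<lambda>p. (traj g pol (X p) (W p) t, pol (traj g pol (X p) (W p) t))) \<in> borel_measurable M"
    by (subst borel_prod[symmetric]) measurable
  then show ?case
    by simp
qed simp

definition horizon_value :: "real \<Rightarrow> real \<Rightarrow> ((real^'d) \<times> 'a \<Rightarrow> real^'d) \<Rightarrow> (real^'d \<Rightarrow> 'a)
    \<Rightarrow> (real^'d \<Rightarrow> real) \<Rightarrow> nat \<Rightarrow> real^'d \<Rightarrow> ennreal" where
  "horizon_value gam sig g pol r T x =
     (\<integral>\<^sup>+ws. (\<Sum>t<T. ennreal (gam ^ t * r (traj g pol x ws t))) \<partial>noise_seq sig)"

definition discounted_value :: "real \<Rightarrow> real \<Rightarrow> ((real^'d) \<times> 'a \<Rightarrow> real^'d) \<Rightarrow> (real^'d \<Rightarrow> 'a)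
    \<Rightarrow> (real^'d \<Rightarrow> real) \<Rightarrow> real^'d \<Rightarrow> ennreal" where
  "discounted_value gam sig g pol r x =
     (\<integral>\<^sup>+ws. (\<Sum>t. ennreal (gam ^ t * r (traj g pol x ws t))) \<partial>noise_seq sig)"

lemma value_c_eq_discounted_value:
  "value_c gam sig c g pol = discounted_value gam sig g pol (\<lambda>y. c (y, pol y))"
  by (simp add: fun_eq_iff value_c_def discounted_value_def)

context
  fixes g :: "(real^'d::finite) \<times> 'a::euclidean_space \<Rightarrow> real^'d" and pol :: "real^'d \<Rightarrow> 'a"
    and r :: "real^'d \<Rightarrow> real" and gam sig :: real
  assumes sig: "0 < sig" and gam: "0 \<le> gam"
    and [measurable]: "g \<in> borel_measurable borel" "pol \<in> borel_measurable borel"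
      "r \<in> borel_measurable borel"
    and r_nonneg: "\<And>x. 0 \<le> r x"
begin

lemma measurable_traj_noise [measurable]:
  "(\<lambda>ws. traj g pol x ws t) \<in> borel_measurable (noise_seq sig)"
  using measurable_traj[of g pol "\<lambda>_. x" "noise_seq sig" "\<lambda>ws. ws"] by simp

lemma measurable_horizon_value [measurable]:
  "horizon_value gam sig g pol r T \<in> borel_measurable borel"
proof -
  interpret prob_space "noise_seq sig :: (nat \<Rightarrow> real^'d) measure"
    by (rule prob_space_noise_seq[OF sig])
  have "(\<lambda>(x, ws). \<Sum>t<T. ennreal (gam ^ t * r (traj g pol x ws t))) \<in> borel_measurable (borel \<Otimes>\<^sub>M noise_seq sig)"
    unfolding case_prod_unfold by measurable
  then show ?thesis
    unfolding horizon_value_def[abs_def] by (rule borel_measurable_nn_integral)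
qed

lemma discounted_value_eq_SUP_horizon_value:
  "discounted_value gam sig g pol r x = (SUP T. horizon_value gam sig g pol r T x)"
proof -
  have "incseq (\<lambda>T ws. \<Sum>t<T. ennreal (gam ^ t * r (traj g pol x ws t)))"
    by (intro monoI le_funI sum_mono2) auto
  then show ?thesis
    unfolding discounted_value_def horizon_value_def suminf_eq_SUP
    by (subst nn_integral_monotone_convergence_SUP) auto
qed

lemma measurable_discounted_value [measurable]:
  "discounted_value gam sig g pol r \<in> borel_measurable borel"
  by (simp add: discounted_value_eq_SUP_horizon_value[abs_def])

lemma horizon_value_Suc:
  "horizon_value gam sig g pol r (Suc T) x
     = ennreal (r x) + ennreal gam * (\<integral>\<^sup>+\<omega>. horizon_value gam sig g pol r T (g (x, pol x) + \<omega>) \<partial>gauss_noise sig)"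
proof -
  interpret prob_space "noise_seq sig :: (nat \<Rightarrow> real^'d) measure"
    by (rule prob_space_noise_seq[OF sig])
  define \<Phi> where "\<Phi> \<omega> ws = (\<Sum>t<T. ennreal (gam ^ t * r (traj g pol (g (x, pol x) + \<omega>) ws t)))" for \<omega> ws
  have \<Phi>_meas [measurable]: "(\<lambda>(\<omega>, ws). \<Phi> \<omega> ws) \<in> borel_measurable (gauss_noise sig \<Otimes>\<^sub>M noise_seq sig)"
    unfolding \<Phi>_def case_prod_unfold by measurable
  have "(\<Sum>t<Suc T. ennreal (gam ^ t * r (traj g pol x ws t)))
      = ennreal (r x) + ennreal gam * \<Phi> (ws 0) (\<lambda>j. ws (Suc j))" for ws
    unfolding sum.lessThan_Suc_shift \<Phi>_def sum_distrib_left
    by (simp add: traj_Suc_restart ennreal_mult[symmetric] gam r_nonneg mult.assoc del: traj.simps(2))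
  then have "horizon_value gam sig g pol r (Suc T) x
      = (\<integral>\<^sup>+ws. ennreal (r x) + ennreal gam * \<Phi> (ws 0) (\<lambda>j. ws (Suc j)) \<partial>noise_seq sig)"
    by (simp add: horizon_value_def)
  also have "\<dots> = ennreal (r x) + ennreal gam * (\<integral>\<^sup>+ws. \<Phi> (ws 0) (\<lambda>j. ws (Suc j)) \<partial>noise_seq sig)"
    using measurable_comp[OF measurable_noise_seq_split \<Phi>_meas]
    by (subst nn_integral_add) (auto simp: comp_def nn_integral_cmult emeasure_space_1)
  also have "(\<integral>\<^sup>+ws. \<Phi> (ws 0) (\<lambda>j. ws (Suc j)) \<partial>noise_seq sig)
      = (\<integral>\<^sup>+\<omega>. (\<integral>\<^sup>+ws. \<Phi> \<omega> ws \<partial>noise_seq sig) \<partial>gauss_noise sig)"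
    by (rule nn_integral_noise_seq_split[OF sig \<Phi>_meas])
  also have "\<dots> = (\<integral>\<^sup>+\<omega>. horizon_value gam sig g pol r T (g (x, pol x) + \<omega>) \<partial>gauss_noise sig)"
    by (simp add: \<Phi>_def horizon_value_def)
  finally show ?thesis .
qed

lemma horizon_value_le:
  assumes r_le: "\<And>y. r y \<le> C" and gam_less: "gam < 1"
  shows "horizon_value gam sig g pol r T x \<le> ennreal (C / (1 - gam))"
proof -
  interpret prob_space "noise_seq sig :: (nat \<Rightarrow> real^'d) measure"
    by (rule prob_space_noise_seq[OF sig])
  have "(\<Sum>t<T. gam ^ t * r (traj g pol x ws t)) \<le> C / (1 - gam)" for ws
  proof -
    have "(\<Sum>t<T. gam ^ t * r (traj g pol x ws t)) \<le> (\<Sum>t<T. gam ^ t * C)"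
      using gam r_le by (intro sum_mono mult_left_mono) auto
    also have "\<dots> = C * (\<Sum>t<T. gam ^ t)"
      by (simp add: sum_distrib_left mult.commute)
    also have "\<dots> = C * (1 - gam ^ T) / (1 - gam)"
      using gam_less by (simp add: sum_gp_strict)
    also have "\<dots> \<le> C / (1 - gam)"
      using gam gam_less r_nonneg[of x] r_le[of x]
      by (intro divide_right_mono mult_left_le) auto
    finally show ?thesis .
  qed
  then have sum_le: "(\<Sum>t<T. ennreal (gam ^ t * r (traj g pol x ws t))) \<le> ennreal (C / (1 - gam))" for ws
    using gam r_nonneg by (simp add: sum_ennreal ennreal_leI)
  have "horizon_value gam sig g pol r T x
      \<le> (\<integral>\<^sup>+ws. ennreal (C / (1 - gam)) \<partial>(noise_seq sig :: (nat \<Rightarrow> real^'d) measure))"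
    unfolding horizon_value_def by (intro nn_integral_mono sum_le)
  then show ?thesis
    by (simp add: emeasure_space_1)
qed

lemma nn_integral_discounted_after_step:
  "(\<integral>\<^sup>+ws. (\<Sum>t. ennreal (gam ^ (k + t) * r (traj g pol (x + ws 0) (\<lambda>j. ws (Suc j)) t))) \<partial>noise_seq sig)
     = ennreal (gam ^ k) * (\<integral>\<^sup>+\<omega>. discounted_value gam sig g pol r (x + \<omega>) \<partial>gauss_noise sig)"
proof -
  define \<Phi> where "\<Phi> \<omega> ws = (\<Sum>t. ennreal (gam ^ (k + t) * r (traj g pol (x + \<omega>) ws t)))" for \<omega> ws
  have \<Phi>_meas: "(\<lambda>(\<omega>, ws). \<Phi> \<omega> ws) \<in> borel_measurable (gauss_noise sig \<Otimes>\<^sub>M noise_seq sig)"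
    unfolding \<Phi>_def case_prod_unfold by measurable
  have \<Phi>_eq: "\<Phi> \<omega> ws = ennreal (gam ^ k) * (\<Sum>t. ennreal (gam ^ t * r (traj g pol (x + \<omega>) ws t)))" for \<omega> ws
    unfolding \<Phi>_def ennreal_suminf_cmult[symmetric]
    by (simp add: ennreal_mult[symmetric] gam r_nonneg power_add mult.assoc)
  have "(\<integral>\<^sup>+ws. \<Phi> (ws 0) (\<lambda>j. ws (Suc j)) \<partial>noise_seq sig)
      = (\<integral>\<^sup>+\<omega>. (\<integral>\<^sup>+ws. \<Phi> \<omega> ws \<partial>noise_seq sig) \<partial>gauss_noise sig)"
    by (rule nn_integral_noise_seq_split[OF sig \<Phi>_meas])
  also have "\<dots> = (\<integral>\<^sup>+\<omega>. ennreal (gam ^ k) * discounted_value gam sig g pol r (x + \<omega>) \<partial>gauss_noise sig)"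
  proof (intro nn_integral_cong)
    fix \<omega>
    show "(\<integral>\<^sup>+ws. \<Phi> \<omega> ws \<partial>noise_seq sig) = ennreal (gam ^ k) * discounted_value gam sig g pol r (x + \<omega>)"
      unfolding \<Phi>_eq discounted_value_def
      by (rule nn_integral_cmult) measurable
  qed
  also have "\<dots> = ennreal (gam ^ k) * (\<integral>\<^sup>+\<omega>. discounted_value gam sig g pol r (x + \<omega>) \<partial>gauss_noise sig)"
  proof (rule nn_integral_cmult)
    have "(\<lambda>\<omega>. discounted_value gam sig g pol r (x + \<omega>)) \<in> borel_measurable borel"
      by measurable
    then show "(\<lambda>\<omega>. discounted_value gam sig g pol r (x + \<omega>)) \<in> borel_measurable (gauss_noise sig)"
      by (simp add: measurable_cong_sets[OF sets_gauss_noise refl])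
  qed
  finally show ?thesis
    by (simp add: \<Phi>_def)
qed

end

section \<open>The pessimism bound\<close>

lemma borel_measurable_continuous_on_graph:
  fixes c :: "'b::second_countable_topology \<times> 'a::second_countable_topology \<Rightarrow> 'c::real_normed_vector"
  assumes "continuous_on (UNIV \<times> A) c" "closed A"
    and [measurable]: "pol \<in> borel_measurable borel" and pol_in: "\<And>s. pol s \<in> A"
  shows "(\<lambda>y. c (y, pol y)) \<in> borel_measurable borel"
proof -
  have [measurable]: "(\<lambda>p. indicator (UNIV \<times> A) p *\<^sub>R c p) \<in> borel_measurable borel"
    using assms by (intro borel_measurable_continuous_on_indicator borel_closed closed_Times) auto
  have [measurable]: "(\<lambda>y. (y, pol y)) \<in> borel_measurable borel"
    by (subst borel_prod[symmetric]) measurable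
  have "(\<lambda>y. indicator (UNIV \<times> A) (y, pol y) *\<^sub>R c (y, pol y)) \<in> borel_measurable borel"
    by measurable
  then show ?thesis
    using pol_in by (simp add: indicator_def)
qed

lemma sum_abs_le_sqrt_card_norm:
  fixes x :: "real^'d::finite"
  shows "(\<Sum>i\<in>UNIV. \<bar>x $ i\<bar>) \<le> sqrt (real CARD('d)) * norm x"
proof -
  have "norm x = L2_set (\<lambda>i. x $ i) UNIV"
    by (simp add: norm_vec_def L2_set_def)
  then show ?thesis
    using L2_set_mult_ineq[of "\<lambda>i. x $ i" "\<lambda>_. 1" UNIV] by (simp add: L2_set_constant mult.commute)
qed

locale pessimism_setting =
  fixes sig gam :: real and A :: "'a::euclidean_space set" and pol :: "real^'d::finite \<Rightarrow> 'a"
    and c :: "(real^'d) \<times> 'a \<Rightarrow> real" and Cmax kmax :: real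
    and mu sn :: "nat \<Rightarrow> (real^'d) \<times> 'a \<Rightarrow> real^'d" and beta :: "nat \<Rightarrow> real" and n N :: nat
  assumes sig_pos: "0 < sig" and gam_pos: "0 < gam" and gam_less_1: "gam < 1"
    and pol_in_A: "\<And>s. pol s \<in> A" and pol_measurable [measurable]: "pol \<in> borel_measurable borel"
    and cost_measurable [measurable]: "(\<lambda>y. c (y, pol y)) \<in> borel_measurable borel"
    and cost_bounds: "\<And>s a. a \<in> A \<Longrightarrow> 0 \<le> c (s, a) \<and> c (s, a) \<le> Cmax"
    and mu_measurable [measurable]: "mu n \<in> borel_measurable borel"
    and sn_measurable [measurable]: "sn n \<in> borel_measurable borel"
    and sn_nonneg: "\<And>x i. 0 \<le> sn n x $ i"
    and beta_mono: "mono beta" and beta_nonneg: "\<And>m. 0 \<le> beta m" and n_le_N: "n \<le> N"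
  fixes lam :: real
  defines "lam \<equiv> lambda_pess Cmax kmax gam (beta N) CARD('d) sig"
begin

abbreviation "models \<equiv> model_set A mu sn beta n"

abbreviation "value_bound \<equiv> Cmax / (1 - gam)"

abbreviation "penalized_cost \<equiv> \<lambda>y. c (y, pol y) + lam * norm (sn n (y, pol y))"

abbreviation "nominal_value \<equiv> discounted_value gam sig (mu n) pol penalized_cost"

lemma Cmax_nonneg: "0 \<le> Cmax"
  using cost_bounds[OF pol_in_A, of 0 0] by linarith

lemma lam_nonneg: "0 \<le> lam"
  unfolding lam_def lambda_pess_def using Cmax_nonneg gam_pos gam_less_1 sig_pos beta_nonneg[of N]
  by (intro mult_nonneg_nonneg divide_nonneg_nonneg) auto

lemma value_bound_nonneg: "0 \<le> value_bound"
  using Cmax_nonneg gam_less_1 by simp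

lemma penalized_cost_nonneg: "0 \<le> penalized_cost y"
  using cost_bounds[OF pol_in_A] lam_nonneg by simp

lemma measurable_penalized_cost [measurable]: "penalized_cost \<in> borel_measurable borel"
proof -
  have [measurable]: "(\<lambda>y. (y, pol y)) \<in> borel_measurable borel"
    by (subst borel_prod[symmetric]) measurable
  show ?thesis
    by measurable
qed

lemma borel_measurable_model: "g \<in> models \<Longrightarrow> g \<in> borel_measurable borel"
  by (simp add: model_set_def)

lemma model_deviation_le:
  assumes g: "g \<in> models" and b: "b \<in> A"
  shows "gam * value_bound * (\<Sum>i\<in>UNIV. \<bar>(g (x, b) - mu n (x, b)) $ i\<bar>) / sig \<le> lam * norm (sn n (x, b))"
proof -
  define dev where "dev = (\<Sum>i\<in>UNIV. \<bar>(g (x, b) - mu n (x, b)) $ i\<bar>)"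
  have "dev \<le> (\<Sum>i\<in>UNIV. beta n * sn n (x, b) $ i)"
    unfolding dev_def using g b by (intro sum_mono) (auto simp: model_set_def)
  also have "\<dots> = beta n * (\<Sum>i\<in>UNIV. \<bar>sn n (x, b) $ i\<bar>)"
    using sn_nonneg by (simp add: sum_distrib_left)
  also have "\<dots> \<le> beta N * (sqrt (real CARD('d)) * norm (sn n (x, b)))"
    using beta_mono n_le_N beta_nonneg
    by (intro mult_mono sum_abs_le_sqrt_card_norm) (auto simp: mono_def sum_nonneg)
  also have "\<dots> \<le> beta N * ((1 + sqrt (real CARD('d))) * norm (sn n (x, b)))"
    using beta_nonneg by (intro mult_left_mono mult_right_mono) auto
  finally have dev_le: "dev \<le> (1 + sqrt (real CARD('d))) * beta N * norm (sn n (x, b))"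
    by (simp add: ac_simps)
  have "gam * value_bound * dev / sig = (Cmax * dev) * (gam / ((1 - gam) * sig))"
    by (simp add: field_simps)
  also have "\<dots> \<le> (max Cmax kmax * ((1 + sqrt (real CARD('d))) * beta N * norm (sn n (x, b))))
      * (gam / ((1 - gam) * sig))"
    using dev_le Cmax_nonneg gam_pos gam_less_1 sig_pos
    by (intro mult_right_mono mult_mono) (auto simp: dev_def sum_nonneg)
  also have "\<dots> = lam * norm (sn n (x, b))"
    using gam_less_1 sig_pos by (simp add: lam_def lambda_pess_def field_simps)
  finally show ?thesis
    by (simp add: dev_def)
qed

lemma nn_integral_model_step_le:
  fixes U :: "real^'d \<Rightarrow> ennreal"
  assumes g: "g \<in> models" and b: "b \<in> A" and [measurable]: "U \<in> borel_measurable borel"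
  shows "ennreal gam * (\<integral>\<^sup>+\<omega>. min (U (g (x, b) + \<omega>)) (ennreal value_bound) \<partial>gauss_noise sig)
           \<le> ennreal gam * (\<integral>\<^sup>+\<omega>. U (mu n (x, b) + \<omega>) \<partial>gauss_noise sig) + ennreal (lam * norm (sn n (x, b)))"
proof -
  define m where "m = g (x, b) - mu n (x, b)"
  define dev where "dev = value_bound * (\<Sum>i\<in>UNIV. \<bar>m $ i\<bar>) / sig"
  have dev_nonneg: "0 \<le> dev"
    unfolding dev_def using Cmax_nonneg gam_less_1 sig_pos
    by (intro divide_nonneg_nonneg mult_nonneg_nonneg sum_nonneg) auto
  have "(\<integral>\<^sup>+\<omega>. min (U (g (x, b) + \<omega>)) (ennreal value_bound) \<partial>gauss_noise sig)
      = (\<integral>\<^sup>+\<omega>. (\<lambda>y. min (U (mu n (x, b) + y)) (ennreal value_bound)) (\<omega> + m) \<partial>gauss_noise sig)"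
    by (simp add: m_def algebra_simps)
  also have "\<dots> \<le> (\<integral>\<^sup>+\<omega>. min (U (mu n (x, b) + \<omega>)) (ennreal value_bound) \<partial>gauss_noise sig) + ennreal dev"
    unfolding dev_def
    by (rule nn_integral_gauss_noise_shift_le[OF _ _ sig_pos value_bound_nonneg]) auto
  also have "\<dots> \<le> (\<integral>\<^sup>+\<omega>. U (mu n (x, b) + \<omega>) \<partial>gauss_noise sig) + ennreal dev"
    by (intro add_right_mono nn_integral_mono) simp
  finally have "ennreal gam * (\<integral>\<^sup>+\<omega>. min (U (g (x, b) + \<omega>)) (ennreal value_bound) \<partial>gauss_noise sig)
      \<le> ennreal gam * (\<integral>\<^sup>+\<omega>. U (mu n (x, b) + \<omega>) \<partial>gauss_noise sig) + ennreal (gam * dev)"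
    using gam_pos dev_nonneg by (simp add: mult_left_mono distrib_left[symmetric] ennreal_mult)
  also have "ennreal (gam * dev) \<le> ennreal (lam * norm (sn n (x, b)))"
    using model_deviation_le[OF g b] unfolding dev_def m_def by (intro ennreal_leI) (simp add: mult.assoc)
  finally show ?thesis
    by (simp add: add_left_mono)
qed

text \<open>The cap by value_bound is what makes the Gaussian shift estimate applicable.\<close>
lemma horizon_value_model_le:
  assumes g: "g \<in> models"
  shows "horizon_value gam sig g pol (\<lambda>y. c (y, pol y)) T x
           \<le> min (horizon_value gam sig (mu n) pol penalized_cost T x) (ennreal value_bound)"
proof (induction T arbitrary: x)
  case (Suc T)
  have [measurable]: "g \<in> borel_measurable borel"
    by (rule borel_measurable_model[OF g])
  let ?U = "horizon_value gam sig (mu n) pol penalized_cost T"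
  have "horizon_value gam sig g pol (\<lambda>y. c (y, pol y)) (Suc T) x
      = ennreal (c (x, pol x)) + ennreal gam
          * (\<integral>\<^sup>+\<omega>. horizon_value gam sig g pol (\<lambda>y. c (y, pol y)) T (g (x, pol x) + \<omega>) \<partial>gauss_noise sig)"
    using sig_pos gam_pos cost_bounds[OF pol_in_A] by (intro horizon_value_Suc) auto
  also have "\<dots> \<le> ennreal (c (x, pol x))
      + ennreal gam * (\<integral>\<^sup>+\<omega>. min (?U (g (x, pol x) + \<omega>)) (ennreal value_bound) \<partial>gauss_noise sig)"
    by (intro add_left_mono mult_left_mono nn_integral_mono Suc.IH) auto
  also have "\<dots> \<le> ennreal (c (x, pol x))
      + (ennreal gam * (\<integral>\<^sup>+\<omega>. ?U (mu n (x, pol x) + \<omega>) \<partial>gauss_noise sig) + ennreal (lam * norm (sn n (x, pol x))))"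
    using sig_pos gam_pos penalized_cost_nonneg
    by (intro add_left_mono nn_integral_model_step_le g pol_in_A) auto
  also have "\<dots> = ennreal (penalized_cost x) + ennreal gam * (\<integral>\<^sup>+\<omega>. ?U (mu n (x, pol x) + \<omega>) \<partial>gauss_noise sig)"
    using cost_bounds[OF pol_in_A] lam_nonneg by (simp add: ac_simps)
  also have "\<dots> = horizon_value gam sig (mu n) pol penalized_cost (Suc T) x"
    using sig_pos gam_pos penalized_cost_nonneg by (intro horizon_value_Suc[symmetric]) auto
  finally show ?case
    using sig_pos gam_pos gam_less_1 cost_bounds[OF pol_in_A]
    by (auto intro: horizon_value_le)
qed (simp add: horizon_value_def)

lemma pess_value_le:
  "pess_value gam sig c models pol y \<le> min (nominal_value y) (ennreal value_bound)"
  unfolding pess_value_def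
proof (rule SUP_least)
  fix g
  assume g: "g \<in> models"
  have [measurable]: "g \<in> borel_measurable borel"
    by (rule borel_measurable_model[OF g])
  have "value_c gam sig c g pol y = (SUP T. horizon_value gam sig g pol (\<lambda>y. c (y, pol y)) T y)"
    using sig_pos gam_pos cost_bounds[OF pol_in_A]
    by (simp add: value_c_eq_discounted_value discounted_value_eq_SUP_horizon_value)
  also have "\<dots> \<le> min (nominal_value y) (ennreal value_bound)"
  proof (rule SUP_least)
    fix T
    have "horizon_value gam sig (mu n) pol penalized_cost T y \<le> nominal_value y"
      using sig_pos gam_pos penalized_cost_nonneg
      by (subst discounted_value_eq_SUP_horizon_value) (auto intro: SUP_upper)
    then show "horizon_value gam sig g pol (\<lambda>y. c (y, pol y)) T y \<le> min (nominal_value y) (ennreal value_bound)"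
      using horizon_value_model_le[OF g, of T y] by (auto simp: min_def split: if_splits)
  qed
  finally show "value_c gam sig c g pol y \<le> min (nominal_value y) (ennreal value_bound)" .
qed

lemma nn_integral_pess_value_le:
  assumes g: "g \<in> models" and a: "a \<in> A"
  shows "ennreal gam * (\<integral>\<^sup>+\<omega>. pess_value gam sig c models pol (g (s, a) + \<omega>) \<partial>gauss_noise sig)
           \<le> ennreal gam * (\<integral>\<^sup>+\<omega>. nominal_value (mu n (s, a) + \<omega>) \<partial>gauss_noise sig)
             + ennreal (lam * norm (sn n (s, a)))"
proof -
  have "(\<integral>\<^sup>+\<omega>. pess_value gam sig c models pol (g (s, a) + \<omega>) \<partial>gauss_noise sig)
      \<le> (\<integral>\<^sup>+\<omega>. min (nominal_value (g (s, a) + \<omega>)) (ennreal value_bound) \<partial>gauss_noise sig)"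
    by (intro nn_integral_mono pess_value_le)
  then show ?thesis
    using sig_pos gam_pos penalized_cost_nonneg
    by (intro order_trans[OF mult_left_mono nn_integral_model_step_le[OF g a]]) auto
qed

lemma pessimism_bound:
  assumes a: "a \<in> A"
  shows "ennreal (gam ^ Suc t) *
           (SUP g\<in>models. \<integral>\<^sup>+\<omega>. pess_value gam sig c models pol (g (s, a) + \<omega>) \<partial>gauss_noise sig)
         \<le> ennreal (gam ^ t * lam * norm (sn n (s, a))) +
           (\<integral>\<^sup>+ws. (\<Sum>\<tau>. ennreal (gam ^ (Suc t + \<tau>) *
               penalized_cost (traj (mu n) pol (mu n (s, a) + ws 0) (\<lambda>j. ws (Suc j)) \<tau>))) \<partial>noise_seq sig)"
proof -
  let ?E = "\<integral>\<^sup>+\<omega>. nominal_value (mu n (s, a) + \<omega>) \<partial>gauss_noise sig"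
  have gam_pow: "ennreal (gam ^ Suc t) = ennreal (gam ^ t) * ennreal gam"
    using gam_pos by (simp add: ennreal_mult[symmetric] mult.commute del: ennreal_mult)
  have "ennreal (gam ^ Suc t) * (\<integral>\<^sup>+\<omega>. pess_value gam sig c models pol (g (s, a) + \<omega>) \<partial>gauss_noise sig)
      \<le> ennreal (gam ^ t) * (ennreal gam * ?E + ennreal (lam * norm (sn n (s, a))))"
    if "g \<in> models" for g
    unfolding gam_pow mult.assoc by (intro mult_left_mono nn_integral_pess_value_le that a) simp
  also have "\<dots> = ennreal (gam ^ t * lam * norm (sn n (s, a))) + ennreal (gam ^ Suc t) * ?E"
    using gam_pos lam_nonneg by (simp add: gam_pow distrib_left ennreal_mult ac_simps)
  finally have "ennreal (gam ^ Suc t) *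
      (SUP g\<in>models. \<integral>\<^sup>+\<omega>. pess_value gam sig c models pol (g (s, a) + \<omega>) \<partial>gauss_noise sig)
      \<le> ennreal (gam ^ t * lam * norm (sn n (s, a))) + ennreal (gam ^ Suc t) * ?E"
    unfolding SUP_mult_left_ennreal by (rule SUP_least)
  also have "ennreal (gam ^ Suc t) * ?E
      = (\<integral>\<^sup>+ws. (\<Sum>\<tau>. ennreal (gam ^ (Suc t + \<tau>) *
           penalized_cost (traj (mu n) pol (mu n (s, a) + ws 0) (\<lambda>j. ws (Suc j)) \<tau>))) \<partial>noise_seq sig)"
    using sig_pos gam_pos penalized_cost_nonneg
    by (intro nn_integral_discounted_after_step[symmetric]) auto
  finally show ?thesis .
qed

end

theorem lemma2:
  fixes M :: "'w measure"
    and f :: "(real^'d) \<times> 'a::euclidean_space \<Rightarrow> real^'d"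
    and r c :: "(real^'d) \<times> 'a \<Rightarrow> real"
    and A :: "'a set"
    and pol :: "real^'d \<Rightarrow> 'a"
    and gam sig Cmax kmax B delta Lf Lr Lc Ls :: real
    and k :: "(real^'d) \<times> 'a \<Rightarrow> (real^'d) \<times> 'a \<Rightarrow> real"
    and N :: nat
    and beta :: "nat \<Rightarrow> real"
    and mu sn :: "'w \<Rightarrow> nat \<Rightarrow> (real^'d) \<times> 'a \<Rightarrow> real^'d"
  assumes M: "prob_space M"
    and gam: "0 < gam" "gam < 1"
    and sig: "0 < sig"
    and delta: "0 < delta" "delta < 1"
    and A: "compact A" "A \<noteq> {}"
    and pol: "\<forall>s. pol s \<in> A" "pol \<in> borel_measurable borel"
    and cost: "\<forall>s. \<forall>a\<in>A. 0 \<le> c (s, a) \<and> c (s, a) \<le> Cmax"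
    \<comment> \<open>(A2)\<close>
    and A2: "Lf-lipschitz_on (UNIV \<times> A) f" "Lr-lipschitz_on (UNIV \<times> A) r"
            "Lc-lipschitz_on (UNIV \<times> A) c" "\<forall>w n. Ls-lipschitz_on (UNIV \<times> A) (sn w n)"
    \<comment> \<open>(A3)\<close>
    and A3: "pos_def_kernel (UNIV \<times> A) k" "\<forall>x\<in>UNIV \<times> A. k x x \<le> kmax"
            "\<forall>i. in_rkhs_ball (UNIV \<times> A) k B (\<lambda>x. f x $ i)"
    \<comment> \<open>the statistical model\<close>
    and model: "\<forall>w n. mu w n \<in> borel_measurable borel" "\<forall>w n. sn w n \<in> borel_measurable borel"
               "\<forall>w n x i. 0 \<le> sn w n x $ i"
    and beta: "mono beta" "\<forall>n. 0 \<le> beta n"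
    \<comment> \<open>well-calibration\<close>
    and calib: "\<exists>E\<in>sets M. measure M E \<ge> 1 - delta \<and>
                  (\<forall>w\<in>E. \<forall>n. \<forall>n'\<le>n. \<forall>s. \<forall>a\<in>A. \<forall>i.
                     \<bar>f (s, a) $ i - mu w n' (s, a) $ i\<bar> \<le> beta n' * sn w n' (s, a) $ i)"
  shows "\<exists>E\<in>sets M. measure M E \<ge> 1 - delta \<and>
           (\<forall>w\<in>E. \<forall>n\<in>{1..N}. \<forall>t::nat. \<forall>s. \<forall>a\<in>A.
              (let lam = lambda_pess Cmax kmax gam (beta N) CARD('d) sig;
                   F = model_set A (mu w) (sn w) beta n
               in ennreal (gam ^ Suc t) *
                    (SUP g\<in>F. \<integral>\<^sup>+ om. pess_value gam sig c F pol (g (s, a) + om) \<partial>gauss_noise sig)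
                  \<le> ennreal (gam ^ t * lam * norm (sn w n (s, a))) +
                    (\<integral>\<^sup>+ ws. (\<Sum>\<tau>. ennreal (gam ^ (Suc t + \<tau>) *
                        (c (traj (mu w n) pol (mu w n (s, a) + ws 0) (\<lambda>j. ws (Suc j)) \<tau>,
                            pol (traj (mu w n) pol (mu w n (s, a) + ws 0) (\<lambda>j. ws (Suc j)) \<tau>))
                         + lam * norm (sn w n
                           (traj (mu w n) pol (mu w n (s, a) + ws 0) (\<lambda>j. ws (Suc j)) \<tau>,
                            pol (traj (mu w n) pol (mu w n (s, a) + ws 0) (\<lambda>j. ws (Suc j)) \<tau>))))))
                     \<partial>noise_seq sig)))"
proof -
  obtain E where E: "E \<in> sets M" "measure M E \<ge> 1 - delta"
    using calib by blast
  have cost_measurable: "(\<lambda>y. c (y, pol y)) \<in> borel_measurable borel"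
    using A2(3) A(1) pol
    by (intro borel_measurable_continuous_on_graph lipschitz_on_continuous_on compact_imp_closed) auto
  have setting: "pessimism_setting sig gam A pol c Cmax (mu w) (sn w) beta n N" if "n \<in> {1..N}" for w n
    using gam sig pol cost cost_measurable model beta that by unfold_locales auto
  show ?thesis
    unfolding Let_def using E
    by (intro bexI[of _ E] conjI ballI allI pessimism_setting.pessimism_bound setting)
qed

end
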